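(* Assume the standing setting and Assumptions (A1), (A2), (A3) described in the context. Then the Riccati difference equation $\Sigma_k=A_k\Sigma_{k+1}\Theta(\Sigma_{k+1})^{-1}A_k^\top+B_k\bar R_k^{-1}B_k^\top$, $k\in\mathcal{T}$, $\Sigma_N=0$, where $\Theta(\Sigma_{k+1})=I+\bar Q_k\Sigma_{k+1}$, admits a unique solution $\{\Sigma_k\}$ consisting of symmetric positive semidefinite matrices, and moreover $\Theta(\Sigma_{k+1})$ is invertible for every $k\in\mathcal{T}$.
   Context: Fix integers $N\ge 1$, $n,m\ge1$, $\mathcal{T}=\{0,\dots,N-1\}$. (A1): $A_k,C_k\in\mathbb{R}^{n\times n}$, $B_k\in\mathbb{R}^{n\times m}$ are deterministic matrices for $k\in\mathcal{T}$ (and a square-integrable process $q$ with $q_k$ $\mathcal{F}_{k-1}$-measurable is given). (A2): $G_0\in\mathbb{S}^n$, $Q_k\in\mathbb{S}^n$, $R_k\in\mathbb{S}^m$, $S_k\in\mathbb{R}^{m\times n}$ deterministic (and square-integrable processes $\eta,\rho$ with $\eta_k,\rho_k$ $\mathcal{F}_{k-1}$-measurable are given). (A3): $G_0\ge0$, $R_k$ uniformly positive definite, and $Q_k-S_k^\top R_k^{-1}S_k\ge0$ for all $k\in\mathcal{T}$. Here $\mathbb{S}^d$ denotes real symmetric $d\times d$ matrices. Define matrices $H_0,\dots,H_N$ by the forward recursion $H_0=G_0$, $H_{k+1}=A_k^\top H_kA_k+(A_k^\top H_kB_k)R_k^{-1}(B_k^\top H_kA_k)$, $k\in\mathcal{T}$.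 Set $\bar Q_k=Q_k-S_k^\top R_k^{-1}S_k$ and $\bar R_k=R_k+B_k^\top H_kB_k$. *)

theory Defs
  imports "HOL-Analysis.Analysis"
begin

definition sym_mat :: "real^'n^'n \<Rightarrow> bool" where
  "sym_mat M \<longleftrightarrow> transpose M = M"

definition psd :: "real^'n^'n \<Rightarrow> bool" where
  "psd M \<longleftrightarrow> sym_mat M \<and> (\<forall>x. 0 \<le> x \<bullet> (M *v x))"

primrec Hseq :: "(nat \<Rightarrow> real^'n^'n) \<Rightarrow> (nat \<Rightarrow> real^'m^'n) \<Rightarrow> (nat \<Rightarrow> real^'m^'m)
    \<Rightarrow> real^'n^'n \<Rightarrow> nat \<Rightarrow> real^'n^'n" where
  "Hseq A B R G0 0 = G0"
| "Hseq A B R G0 (Suc k) =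
     transpose (A k) ** Hseq A B R G0 k ** A k
     + (transpose (A k) ** Hseq A B R G0 k ** B k) ** matrix_inv (R k)
       ** (transpose (B k) ** Hseq A B R G0 k ** A k)"

definition Qbar :: "(nat \<Rightarrow> real^'n^'n) \<Rightarrow> (nat \<Rightarrow> real^'n^'m) \<Rightarrow> (nat \<Rightarrow> real^'m^'m)
    \<Rightarrow> nat \<Rightarrow> real^'n^'n" where
  "Qbar Q S R k = Q k - transpose (S k) ** matrix_inv (R k) ** S k"

definition Rbar :: "(nat \<Rightarrow> real^'n^'n) \<Rightarrow> (nat \<Rightarrow> real^'m^'n) \<Rightarrow> (nat \<Rightarrow> real^'m^'m)
    \<Rightarrow> real^'n^'n \<Rightarrow> nat \<Rightarrow> real^'m^'m" where
  "Rbar A B R G0 k = R k + transpose (B k) ** Hseq A B R G0 k ** B k"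

definition Theta :: "(nat \<Rightarrow> real^'n^'n) \<Rightarrow> (nat \<Rightarrow> real^'n^'m) \<Rightarrow> (nat \<Rightarrow> real^'m^'m)
    \<Rightarrow> nat \<Rightarrow> real^'n^'n \<Rightarrow> real^'n^'n" where
  "Theta Q S R k Sig = mat 1 + Qbar Q S R k ** Sig"

definition riccati_sol :: "nat \<Rightarrow> (nat \<Rightarrow> real^'n^'n) \<Rightarrow> (nat \<Rightarrow> real^'m^'n)
    \<Rightarrow> (nat \<Rightarrow> real^'n^'n) \<Rightarrow> (nat \<Rightarrow> real^'n^'m) \<Rightarrow> (nat \<Rightarrow> real^'m^'m)
    \<Rightarrow> real^'n^'n \<Rightarrow> (nat \<Rightarrow> real^'n^'n) \<Rightarrow> bool" where
  "riccati_sol N A B Q S R G0 Sig \<longleftrightarrow>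
     Sig N = 0 \<and>
     (\<forall>k<N. Sig k = A k ** Sig (Suc k) ** matrix_inv (Theta Q S R k (Sig (Suc k))) ** transpose (A k)
                   + B k ** matrix_inv (Rbar A B R G0 k) ** transpose (B k))"

end

theory Submission
  imports Defs
begin

text \<open>The Riccati equation runs backwards from \<open>\<Sigma>\<^sub>N = 0\<close>, so existence and uniqueness are
  immediate once every step is well defined; the content is that the step preserves positive
  semidefiniteness. For psd \<open>P\<close> and \<open>Q\<close> the matrix \<open>I + Q P\<close> is invertible: if \<open>x = - Q P x\<close> then
  \<open>x\<^sup>T P x = - (P x)\<^sup>T Q (P x) \<le> 0\<close>, hence \<open>P x = 0\<close> and \<open>x = 0\<close>. Moreover \<open>P (I + Q P)\<^sup>-\<^sup>1\<close> is
  symmetric, because \<open>(I + P Q) P = P (I + Q P)\<close>, and psd, because with \<open>x = (I + Q P) y\<close> its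
  quadratic form is \<open>y\<^sup>T P y + (P y)\<^sup>T Q (P y)\<close>. Finally \<open>R\<^sub>k + B\<^sub>k\<^sup>T H\<^sub>k B\<^sub>k\<close> is positive definite,
  since each \<open>H\<^sub>k\<close> is a sum of congruences of psd matrices.\<close>

lemma matrix_inv_right:
  fixes M :: "'a::semiring_1^'n^'m"
  assumes "invertible M"
  shows "M ** matrix_inv M = mat 1"
  using someI_ex[OF assms[unfolded invertible_def]] unfolding matrix_inv_def by blast

lemma matrix_inv_left:
  fixes M :: "'a::semiring_1^'n^'m"
  assumes "invertible M"
  shows "matrix_inv M ** M = mat 1"
  using someI_ex[OF assms[unfolded invertible_def]] unfolding matrix_inv_def by blast

lemma invertible_if_kernel_zero:
  fixes M :: "'a::field^'n^'n"
  assumes "\<And>x. M *v x = 0 \<Longrightarrow> x = 0"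
  shows "invertible M"
  using assms matrix_left_invertible_ker invertible_left_inverse by blast

lemma transpose_add: "transpose (M + P) = transpose M + transpose (P :: 'a::semiring_1^'n^'m)"
  by (simp add: transpose_def vec_eq_iff)

lemma matrix_add_rdistrib: "(B + C) ** A = B ** A + C ** (A :: 'a::semiring_1^'p^'n)"
  by (vector matrix_matrix_mult_def sum.distrib[symmetric] field_simps)

lemma transpose_matrix_inv:
  fixes M :: "real^'n^'n"
  assumes "invertible M"
  shows "transpose (matrix_inv M) = matrix_inv (transpose M)"
proof -
  have inv_transpose: "invertible (transpose M)"
    using assms transpose_invertible by blast
  have left_inv: "transpose (matrix_inv M) ** transpose M = mat 1"
    by (metis assms matrix_inv_right matrix_transpose_mul transpose_mat)
  have "transpose (matrix_inv M)
      = transpose (matrix_inv M) ** (transpose M ** matrix_inv (transpose M))"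
    by (simp add: matrix_inv_right[OF inv_transpose])
  also have "\<dots> = matrix_inv (transpose M)"
    by (metis matrix_mul_assoc left_inv matrix_mul_lid)
  finally show ?thesis .
qed

lemma inner_congruence:
  fixes C :: "real^'b^'a" and M :: "real^'a^'a"
  shows "x \<bullet> ((transpose C ** M ** C) *v x) = (C *v x) \<bullet> (M *v (C *v x))"
  by (metis dot_lmul_matrix matrix_vector_mul_assoc vector_transpose_matrix)

lemma sym_mat_inner:
  fixes M :: "real^'n^'n"
  assumes "sym_mat M"
  shows "(M *v x) \<bullet> y = x \<bullet> (M *v y)"
  using assms unfolding sym_mat_def
  by (metis dot_lmul_matrix vector_transpose_matrix inner_commute)

lemma psd_zero: "psd (0 :: real^'n^'n)"
  by (simp add: psd_def sym_mat_def transpose_def vec_eq_iff)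

lemma psd_add: "psd M \<Longrightarrow> psd P \<Longrightarrow> psd (M + P)"
  unfolding psd_def sym_mat_def
  by (simp add: matrix_vector_mult_add_rdistrib inner_add_right transpose_add)

lemma psd_congruence:
  fixes C :: "real^'b^'a" and M :: "real^'a^'a"
  assumes "psd M"
  shows "psd (transpose C ** M ** C)"
  using assms unfolding psd_def sym_mat_def
  by (simp add: inner_congruence matrix_transpose_mul matrix_mul_assoc)

lemma psd_matrix_inv:
  fixes M :: "real^'n^'n"
  assumes "psd M" and "invertible M"
  shows "psd (matrix_inv M)"
  unfolding psd_def sym_mat_def
proof (intro conjI allI)
  show "transpose (matrix_inv M) = matrix_inv M"
    using assms transpose_matrix_inv unfolding psd_def sym_mat_def by metis
next
  fix x
  define y where "y = matrix_inv M *v x"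
  have "x = M *v y"
    unfolding y_def by (simp add: matrix_vector_mul_assoc matrix_inv_right[OF assms(2)])
  then have "x \<bullet> (matrix_inv M *v x) = y \<bullet> (M *v y)"
    unfolding y_def by (simp add: inner_commute)
  then show "0 \<le> x \<bullet> (matrix_inv M *v x)"
    using assms(1) unfolding psd_def by simp
qed

lemma psd_quadratic_form_eq_0:
  fixes M :: "real^'n^'n"
  assumes "psd M" and "x \<bullet> (M *v x) = 0"
  shows "M *v x = 0"
proof -
  define v where "v = M *v x"
  define a where "a = v \<bullet> v"
  define b where "b = v \<bullet> (M *v v)"
  \<comment> \<open>With this \<open>t\<close> the form at \<open>x - t v\<close> is \<open>- t\<^sup>2 (b + 2)\<close>, so psd forces \<open>t = 0\<close>.\<close>
  define t where "t = a / (b + 1)"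
  have b_nonneg: "0 \<le> b"
    using assms(1) unfolding b_def psd_def by simp
  then have a_eq: "a = t * (b + 1)"
    unfolding t_def by simp
  have "x \<bullet> (M *v v) = a"
    using sym_mat_inner[of M x v] assms(1) unfolding psd_def v_def a_def by simp
  then have "(x - t *\<^sub>R v) \<bullet> (M *v (x - t *\<^sub>R v)) = - 2 * t * a + t\<^sup>2 * b"
    using assms(2) unfolding a_def b_def v_def
    by (simp add: matrix_vector_mult_diff_distrib matrix_vector_mult_scaleR inner_diff_left
        inner_diff_right inner_commute[of "M *v x" x] power2_eq_square algebra_simps)
  also have "\<dots> = - (t\<^sup>2 * (b + 2))"
    using a_eq by (simp add: power2_eq_square algebra_simps)
  finally have "t\<^sup>2 * (b + 2) \<le> 0"
    using assms(1) unfolding psd_def by (metis neg_0_le_iff_le)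
  then have "t = 0"
    using b_nonneg by (smt (verit) mult_pos_pos zero_less_power2)
  then have "a = 0"
    using a_eq by simp
  then show ?thesis
    unfolding a_def v_def by simp
qed

definition pd :: "real^'n^'n \<Rightarrow> bool" where
  "pd M \<longleftrightarrow> sym_mat M \<and> (\<forall>x. x \<noteq> 0 \<longrightarrow> 0 < x \<bullet> (M *v x))"

lemma pd_if_uniformly_positive:
  assumes "sym_mat M" and "\<delta> > 0" and "\<And>x. \<delta> * (norm x)\<^sup>2 \<le> x \<bullet> (M *v x)"
  shows "pd M"
  unfolding pd_def using assms by (smt (verit) mult_pos_pos zero_less_norm_iff zero_less_power)

lemma pd_imp_psd: "pd M \<Longrightarrow> psd M"
  unfolding pd_def psd_def by (metis inner_zero_left order_le_less)

lemma pd_imp_invertible: "pd M \<Longrightarrow> invertible M"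
  unfolding pd_def by (metis invertible_if_kernel_zero inner_zero_right less_irrefl)

lemma pd_add_psd:
  assumes "pd M" and "psd P"
  shows "pd (M + P)"
  using assms psd_add[OF pd_imp_psd] unfolding pd_def psd_def
  by (auto simp: matrix_vector_mult_add_rdistrib inner_add_right add_pos_nonneg)

lemma invertible_mat_1_add_psd_mult:
  fixes P Q :: "real^'n^'n"
  assumes "psd P" and "psd Q"
  shows "invertible (mat 1 + Q ** P)"
proof (rule invertible_if_kernel_zero)
  fix x
  assume "(mat 1 + Q ** P) *v x = 0"
  then have x_eq: "x = - (Q *v (P *v x))"
    by (simp add: matrix_vector_mult_add_rdistrib matrix_vector_mul_assoc eq_neg_iff_add_eq_0)
  have "x \<bullet> (P *v x) = - ((P *v x) \<bullet> (Q *v (P *v x)))"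
    by (subst (1) x_eq) (simp add: inner_commute)
  then have "x \<bullet> (P *v x) = 0"
    using assms unfolding psd_def by (smt (verit))
  then have "P *v x = 0"
    using psd_quadratic_form_eq_0[OF assms(1)] by simp
  then show "x = 0"
    using x_eq by simp
qed

lemma psd_mult_inv_mat_1_add:
  fixes P Q :: "real^'n^'n"
  assumes "psd P" and "psd Q"
  shows "psd (P ** matrix_inv (mat 1 + Q ** P))"
proof -
  define T where "T = mat 1 + Q ** P"
  have inv: "invertible T"
    unfolding T_def using invertible_mat_1_add_psd_mult[OF assms] .
  have inv_transpose: "invertible (transpose T)"
    using inv transpose_invertible by blast
  have sym_P: "transpose P = P" and sym_Q: "transpose Q = Q"
    using assms unfolding psd_def sym_mat_def by auto
  have intertwine: "transpose T ** P = P ** T"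
    unfolding T_def
    by (simp add: transpose_add matrix_transpose_mul sym_P sym_Q matrix_add_ldistrib
        matrix_add_rdistrib matrix_mul_assoc)
  have "transpose (P ** matrix_inv T) = matrix_inv (transpose T) ** P ** (T ** matrix_inv T)"
    by (simp add: matrix_transpose_mul transpose_matrix_inv[OF inv] sym_P matrix_inv_right[OF inv])
  also have "\<dots> = matrix_inv (transpose T) ** (transpose T ** P) ** matrix_inv T"
    by (simp add: intertwine matrix_mul_assoc)
  also have "\<dots> = P ** matrix_inv T"
    by (simp add: matrix_mul_assoc matrix_inv_left[OF inv_transpose])
  finally have sym: "transpose (P ** matrix_inv T) = P ** matrix_inv T" .
  have "0 \<le> x \<bullet> ((P ** matrix_inv T) *v x)" for x
  proof -
    define y where "y = matrix_inv T *v x"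
    have "x = T *v y"
      unfolding y_def by (simp add: matrix_vector_mul_assoc matrix_inv_right[OF inv])
    then have x_eq: "x = y + Q *v (P *v y)"
      unfolding T_def by (simp add: matrix_vector_mult_add_rdistrib matrix_vector_mul_assoc)
    have "x \<bullet> ((P ** matrix_inv T) *v x) = x \<bullet> (P *v y)"
      unfolding y_def by (simp add: matrix_vector_mul_assoc)
    also have "\<dots> = y \<bullet> (P *v y) + (P *v y) \<bullet> (Q *v (P *v y))"
      by (subst x_eq) (simp add: inner_add_right inner_commute)
    finally show ?thesis
      using assms unfolding psd_def by (metis add_nonneg_nonneg)
  qed
  with sym show ?thesis
    unfolding psd_def sym_mat_def T_def by simp
qed

lemma Hseq_psd:
  assumes "psd G0" and "\<forall>j<k. pd (R j)"
  shows "psd (Hseq A B R G0 k)"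
  using assms(2)
proof (induction k)
  case 0
  then show ?case using assms(1) by simp
next
  case (Suc k)
  define H where "H = Hseq A B R G0 k"
  define C where "C = transpose (B k) ** H ** A k"
  have psd_H: "psd H"
    unfolding H_def using Suc by simp
  then have "transpose C = transpose (A k) ** H ** B k"
    unfolding C_def psd_def sym_mat_def by (simp add: matrix_transpose_mul matrix_mul_assoc)
  then have "Hseq A B R G0 (Suc k) = transpose (A k) ** H ** A k + transpose C ** matrix_inv (R k) ** C"
    by (simp add: H_def C_def)
  moreover have "psd (matrix_inv (R k))"
    using Suc.prems by (simp add: psd_matrix_inv pd_imp_psd pd_imp_invertible)
  ultimately show ?case
    using psd_add psd_congruence psd_H by metis
qed

lemma Rbar_pd:
  assumes "psd G0" and "\<forall>j\<le>k. pd (R j)"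
  shows "pd (Rbar A B R G0 k)"
  unfolding Rbar_def using assms by (auto intro!: pd_add_psd psd_congruence Hseq_psd)

definition riccati_step ::
    "real^'n^'n \<Rightarrow> real^'m^'n \<Rightarrow> real^'n^'n \<Rightarrow> real^'m^'m \<Rightarrow> real^'n^'n \<Rightarrow> real^'n^'n" where
  "riccati_step A B Qb Rb P =
     A ** P ** matrix_inv (mat 1 + Qb ** P) ** transpose A + B ** matrix_inv Rb ** transpose B"

lemma psd_riccati_step:
  assumes "psd Qb" and "pd Rb" and "psd P"
  shows "psd (riccati_step A B Qb Rb P)"
proof -
  have "psd (transpose (transpose A) ** (P ** matrix_inv (mat 1 + Qb ** P)) ** transpose A)"
    using psd_congruence psd_mult_inv_mat_1_add[OF assms(3,1)] by blast
  moreover have "psd (transpose (transpose B) ** matrix_inv Rb ** transpose B)"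
    using psd_congruence psd_matrix_inv pd_imp_psd pd_imp_invertible assms(2) by blast
  ultimately show ?thesis
    unfolding riccati_step_def using psd_add by (simp add: matrix_mul_assoc)
qed

lemma riccati_sol_iff:
  "riccati_sol N A B Q S R G0 Sig \<longleftrightarrow> Sig N = 0 \<and>
     (\<forall>k<N. Sig k = riccati_step (A k) (B k) (Qbar Q S R k) (Rbar A B R G0 k) (Sig (Suc k)))"
  unfolding riccati_sol_def riccati_step_def Theta_def ..

function backward_rec :: "(nat \<Rightarrow> 'a \<Rightarrow> 'a) \<Rightarrow> 'a \<Rightarrow> nat \<Rightarrow> nat \<Rightarrow> 'a" where
  "backward_rec f z N k = (if k < N then f k (backward_rec f z N (Suc k)) else z)"
  by auto
termination
  by (relation "Wellfounded.measure (\<lambda>(_, _, N, k). N - k)") auto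

declare backward_rec.simps [simp del]

lemma backward_rec_final: "backward_rec f z N N = z"
  by (simp add: backward_rec.simps)

lemma backward_rec_step: "k < N \<Longrightarrow> backward_rec f z N k = f k (backward_rec f z N (Suc k))"
  by (simp add: backward_rec.simps)

lemma backward_rec_unique:
  assumes "X N = z" and "\<forall>k<N. X k = f k (X (Suc k))" and "k \<le> N"
  shows "X k = backward_rec f z N k"
  using assms(3)
  by (induction rule: inc_induct) (simp_all add: assms(1,2) backward_rec_final backward_rec_step)

lemma backward_rec_invariant:
  assumes "P z" and "\<And>k x. k < N \<Longrightarrow> P x \<Longrightarrow> P (f k x)" and "k \<le> N"
  shows "P (backward_rec f z N k)"
  using assms(3)
  by (induction rule: inc_induct) (simp_all add: assms(1,2) backward_rec_final backward_rec_step)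

theorem theorem4p3:
  fixes N :: nat
    and A :: "nat \<Rightarrow> real^'n^'n" and B :: "nat \<Rightarrow> real^'m^'n"
    and G0 :: "real^'n^'n" and Q :: "nat \<Rightarrow> real^'n^'n"
    and R :: "nat \<Rightarrow> real^'m^'m" and S :: "nat \<Rightarrow> real^'n^'m"
  assumes N: "N \<ge> 1"
    and G0_sym: "sym_mat G0" and Q_sym: "\<forall>k<N. sym_mat (Q k)" and R_sym: "\<forall>k<N. sym_mat (R k)"
    and G0_psd: "psd G0"
    and R_unif_pd: "\<exists>\<delta>>0. \<forall>k<N. \<forall>x. \<delta> * (norm x)\<^sup>2 \<le> x \<bullet> (R k *v x)"
    and Qbar_psd: "\<forall>k<N. psd (Q k - transpose (S k) ** matrix_inv (R k) ** S k)"
  shows "\<exists>Sig. riccati_sol N A B Q S R G0 Sig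
            \<and> (\<forall>k\<le>N. psd (Sig k))
            \<and> (\<forall>k<N. invertible (Theta Q S R k (Sig (Suc k))))
            \<and> (\<forall>Sig'. riccati_sol N A B Q S R G0 Sig' \<longrightarrow> (\<forall>k\<le>N. Sig' k = Sig k))"
proof -
  obtain \<delta> where "\<delta> > 0" and "\<forall>k<N. \<forall>x. \<delta> * (norm x)\<^sup>2 \<le> x \<bullet> (R k *v x)"
    using R_unif_pd by blast
  then have R_pd: "pd (R k)" if "k < N" for k
    using R_sym that by (blast intro: pd_if_uniformly_positive)
  have Rbar: "pd (Rbar A B R G0 k)" if "k < N" for k
    using R_pd that by (intro Rbar_pd[OF G0_psd]) auto
  have Qbar: "psd (Qbar Q S R k)" if "k < N" for k
    using Qbar_psd that unfolding Qbar_def by simp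
  define f where "f k = riccati_step (A k) (B k) (Qbar Q S R k) (Rbar A B R G0 k)" for k
  define Sig where "Sig = backward_rec f 0 N"
  have sol: "riccati_sol N A B Q S R G0 Sig"
    unfolding riccati_sol_iff Sig_def f_def[symmetric]
    by (simp add: backward_rec_final backward_rec_step)
  have "psd (f k P)" if "k < N" and "psd P" for k P
    unfolding f_def using psd_riccati_step Qbar Rbar that by blast
  then have psd: "\<forall>k\<le>N. psd (Sig k)"
    unfolding Sig_def using backward_rec_invariant[where P = psd, OF psd_zero] by blast
  have inv: "\<forall>k<N. invertible (Theta Q S R k (Sig (Suc k)))"
    unfolding Theta_def using psd Qbar by (metis Suc_leI invertible_mat_1_add_psd_mult)
  have unique: "\<forall>Sig'. riccati_sol N A B Q S R G0 Sig' \<longrightarrow> (\<forall>k\<le>N. Sig' k = Sig k)"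
    unfolding riccati_sol_iff Sig_def f_def[symmetric] by (metis backward_rec_unique)
  show ?thesis
    using sol psd inv unique by blast
qed

end
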